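(* Let $c\in\mathbb{R}^n$, $A\in\mathbb{R}^{m\times n}$, $b\in\mathbb{R}^m$ and $\emptyset\neq I\subseteq\{1,\dots,n\}$, and let $X:=\{x\in\mathbb{R}^n : Ax\ge b,\ x_I\in[0,1]^I\}$ be nonempty and $Y:=\{0,1\}^I$. Consider the problem $$\min_{x,y}\ \|x_I-y\|_1 \quad\text{s.t.}\quad x\in X,\ y\in Y. \qquad (\ast)$$ Apply the alternating direction method to $(\ast)$: starting from $(x^0,y^0)\in X\times Y$, for $k=0,1,\dots$ compute $x^{k+1}\in\arg\min_{x\in X}\|x_I-y^k\|_1$ (a global minimizer) and $y^{k+1}\in\arg\min_{y\in Y}\|x^{k+1}_I-y\|_1$, where ties in the $y$-step are resolved by choosing the lexicographically minimal minimizer, so that the $y$-step has a unique output; the method stops as soon as the current iterate $(x^k,y^k)$ is a partial minimum of $(\ast)$. Then the sequence of iterates $z^k=(x^k,y^k)$ does not cycle, i.e., there is no iteration $k$ and no $l\ge 2$ with $z^k=z^{k+l}$.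
   Context: A point $(x^*,y^* )\in X\times Y$ is a partial minimum of $(\ast)$ if $\|x^*_I-y^*\|_1\le\|x_I-y^*\|_1$ for all $x\in X$ and $\|x^*_I-y^*\|_1\le \|x^*_I-y\|_1$ for all $y\in Y$. $x_I$ denotes the subvector of $x$ with components indexed by $I$. *)

theory Defs
  imports "HOL-Analysis.Analysis" "HOL-Library.Extended_Nat"
begin

text \<open>Vectors in R^n are \<open>real^'n\<close>; the index type 'n is a finite linear order
  (playing the role of {1,...,n} with its natural order). Elements of Y = {0,1}^I are represented as vectors in R^n
  with entries in {0,1} on I and 0 off I (canonical representatives).\<close>

definition feasX :: "real^'n^'m \<Rightarrow> real^'m \<Rightarrow> ('n::finite) set \<Rightarrow> (real^'n) set" where
  "feasX A b I = {x. (\<forall>j. (A *v x) $ j \<ge> b $ j) \<and> (\<forall>i\<in>I. 0 \<le> x $ i \<and> x $ i \<le> 1)}"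

definition binY :: "('n::finite) set \<Rightarrow> (real^'n) set" where
  "binY I = {y. (\<forall>i\<in>I. y $ i = 0 \<or> y $ i = 1) \<and> (\<forall>i. i \<notin> I \<longrightarrow> y $ i = 0)}"

definition dist1I :: "('n::finite) set \<Rightarrow> real^'n \<Rightarrow> real^'n \<Rightarrow> real" where
  "dist1I I x y = (\<Sum>i\<in>I. \<bar>x $ i - y $ i\<bar>)"

definition partial_min :: "real^'n^'m \<Rightarrow> real^'m \<Rightarrow> ('n::finite) set \<Rightarrow> real^'n \<Rightarrow> real^'n \<Rightarrow> bool" where
  "partial_min A b I xs ys \<longleftrightarrow> xs \<in> feasX A b I \<and> ys \<in> binY I \<and>
     (\<forall>x\<in>feasX A b I. dist1I I xs ys \<le> dist1I I x ys) \<and>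
     (\<forall>y\<in>binY I. dist1I I xs ys \<le> dist1I I xs y)"

definition lex_lessI :: "('n::{finite,linorder}) set \<Rightarrow> real^('n::{finite,linorder}) \<Rightarrow> real^('n::{finite,linorder}) \<Rightarrow> bool" where
  "lex_lessI I y y' \<longleftrightarrow> (\<exists>i\<in>I. y $ i < y' $ i \<and> (\<forall>j\<in>I. j < i \<longrightarrow> y $ j = y' $ j))"

definition is_argmin_on :: "'a set \<Rightarrow> ('a \<Rightarrow> real) \<Rightarrow> 'a \<Rightarrow> bool" where
  "is_argmin_on S f z \<longleftrightarrow> z \<in> S \<and> (\<forall>w\<in>S. f z \<le> f w)"

definition lexmin_ystep :: "('n::{finite,linorder}) set \<Rightarrow> real^('n::{finite,linorder}) \<Rightarrow> real^('n::{finite,linorder}) \<Rightarrow> bool" where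
  "lexmin_ystep I x y \<longleftrightarrow> is_argmin_on (binY I) (dist1I I x) y \<and>
     (\<forall>y'. is_argmin_on (binY I) (dist1I I x) y' \<and> y' \<noteq> y \<longrightarrow> lex_lessI I y y')"

end

theory Submission
  imports Defs
begin

text \<open>Each half-step of alternating minimization can only decrease the objective, so
  along a cycle the objective is constant. In particular, two steps after the start of a
  cycle the x-step made no progress against the previous y-iterate; hence that x-iterate
  was already optimal for its y-iterate, which in turn was optimal for it, i.e. the
  method had reached a partial minimum and should have stopped.\<close>

definition is_partial_min :: "'a set \<Rightarrow> 'b set \<Rightarrow> ('a \<Rightarrow> 'b \<Rightarrow> real) \<Rightarrow> 'a \<Rightarrow> 'b \<Rightarrow> bool" where
  "is_partial_min X Y f u v \<longleftrightarrow> u \<in> X \<and> v \<in> Y \<and>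
     (\<forall>u'\<in>X. f u v \<le> f u' v) \<and> (\<forall>v'\<in>Y. f u v \<le> f u v')"

lemma partial_min_eq_is_partial_min:
  "partial_min A b I u v = is_partial_min (feasX A b I) (binY I) (dist1I I) u v"
  unfolding partial_min_def is_partial_min_def by simp

lemma is_partial_min_if_x_step_stalls:
  assumes "u \<in> X" "is_argmin_on Y (f u) v" "is_argmin_on X (\<lambda>w. f w v) u'"
    and "f u' v = f u v"
  shows "is_partial_min X Y f u v"
  using assms unfolding is_partial_min_def is_argmin_on_def by metis

lemma lexmin_ystep_is_argmin: "lexmin_ystep I u v \<Longrightarrow> is_argmin_on (binY I) (dist1I I u) v"
  unfolding lexmin_ystep_def by simp

lemma enat_Suc_le_imp_le: "enat (Suc k) \<le> N \<Longrightarrow> enat k \<le> N"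
  by (erule order_trans[rotated]) simp

locale alternating_minimization =
  fixes X :: "'a set" and Y :: "'b set" and f :: "'a \<Rightarrow> 'b \<Rightarrow> real"
    and x :: "nat \<Rightarrow> 'a" and y :: "nat \<Rightarrow> 'b" and N :: enat
  assumes start: "x 0 \<in> X" "y 0 \<in> Y"
    and x_step: "enat (Suc k) \<le> N \<Longrightarrow> is_argmin_on X (\<lambda>w. f w (y k)) (x (Suc k))"
    and y_step: "enat (Suc k) \<le> N \<Longrightarrow> is_argmin_on Y (f (x (Suc k))) (y (Suc k))"
begin

lemma iterate_in_X: "enat k \<le> N \<Longrightarrow> x k \<in> X"
  using start x_step unfolding is_argmin_on_def by (cases k) auto

lemma iterate_in_Y: "enat k \<le> N \<Longrightarrow> y k \<in> Y"
  using start y_step unfolding is_argmin_on_def by (cases k) auto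

lemma x_step_decreases:
  assumes "enat (Suc k) \<le> N"
  shows "f (x (Suc k)) (y k) \<le> f (x k) (y k)"
  using x_step[OF assms] iterate_in_X[OF enat_Suc_le_imp_le[OF assms]]
  unfolding is_argmin_on_def by blast

lemma y_step_decreases:
  assumes "enat (Suc k) \<le> N"
  shows "f (x (Suc k)) (y (Suc k)) \<le> f (x (Suc k)) (y k)"
  using y_step[OF assms] iterate_in_Y[OF enat_Suc_le_imp_le[OF assms]]
  unfolding is_argmin_on_def by blast

lemma objective_antimono:
  assumes "j \<le> k" "enat k \<le> N"
  shows "f (x k) (y k) \<le> f (x j) (y j)"
  using assms
proof (induction k rule: dec_induct)
  case (step i)
  then have "enat i \<le> N" using enat_Suc_le_imp_le by blast
  then show ?case
    using step x_step_decreases[of i] y_step_decreases[of i] by fastforce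
qed simp

theorem no_cycle:
  assumes continue: "\<And>k. enat (Suc k) \<le> N \<Longrightarrow> \<not> is_partial_min X Y f (x k) (y k)"
    and "l \<ge> 2" "enat (k + l) \<le> N" "x k = x (k + l)" "y k = y (k + l)"
  shows False
proof -
  have N2: "enat (Suc (Suc k)) \<le> N"
    using \<open>l \<ge> 2\<close> \<open>enat (k + l) \<le> N\<close> by (erule_tac order_trans[rotated]) simp
  have N1: "enat (Suc k) \<le> N" using enat_Suc_le_imp_le[OF N2] .
  have "f (x k) (y k) \<le> f (x (Suc (Suc k))) (y (Suc (Suc k)))"
    using objective_antimono[of "Suc (Suc k)" "k + l"] assms(2-5) by simp
  then have "f (x (Suc k)) (y (Suc k)) \<le> f (x (Suc (Suc k))) (y (Suc k))"
    using y_step_decreases[OF N2] objective_antimono[of k "Suc k"] N1 by linarith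
  then have "f (x (Suc (Suc k))) (y (Suc k)) = f (x (Suc k)) (y (Suc k))"
    using x_step_decreases[OF N2] by linarith
  then have "is_partial_min X Y f (x (Suc k)) (y (Suc k))"
    by (rule is_partial_min_if_x_step_stalls[OF iterate_in_X[OF N1] y_step[OF N1] x_step[OF N2]])
  with continue[OF N2] show False by contradiction
qed

end

theorem mainTheorem1:
  fixes c :: "real^('n::{finite,linorder})"
    and A :: "real^('n::{finite,linorder})^('m::finite)"
    and b :: "real^'m"
    and I :: "('n::{finite,linorder}) set"
    and x y :: "nat \<Rightarrow> real^('n::{finite,linorder})"
    and N :: enat
  assumes "I \<noteq> {}"
    and "feasX A b I \<noteq> {}"
    and "x 0 \<in> feasX A b I" and "y 0 \<in> binY I"
    and "\<And>k. enat (Suc k) \<le> N \<Longrightarrow>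
           \<not> partial_min A b I (x k) (y k) \<and>
           is_argmin_on (feasX A b I) (\<lambda>v. dist1I I v (y k)) (x (Suc k)) \<and>
           lexmin_ystep I (x (Suc k)) (y (Suc k))"
    and "\<And>k. enat k = N \<Longrightarrow> partial_min A b I (x k) (y k)"
  shows "\<not> (\<exists>k l. l \<ge> 2 \<and> enat (k + l) \<le> N \<and> x k = x (k + l) \<and> y k = y (k + l))"
proof -
  interpret alternating_minimization "feasX A b I" "binY I" "dist1I I" x y N
    using assms(3-5) lexmin_ystep_is_argmin by unfold_locales blast+
  show ?thesis
    using no_cycle assms(5) unfolding partial_min_eq_is_partial_min by blast
qed

end
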